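(* For $n\ge3$ let $\mathcal{K}_n(\lambda)=\det(\lambda I_n-M_n)$, where $M_n$ is the $n\times n$ matrix with $(M_n)_{j,i}=1$ if $i\ge j-1$ or $(j,i)=(n,n-2)$, and $(M_n)_{j,i}=0$ otherwise. Then $\mathcal{K}_3(\lambda)=\lambda^3-3\lambda^2$, $\mathcal{K}_4(\lambda)=\lambda^4-4\lambda^3+2\lambda^2$, and $$\mathcal{K}_n(\lambda)=\lambda\,\mathcal{K}_{n-1}(\lambda)-\lambda\,\mathcal{K}_{n-2}(\lambda)\qquad(n\ge5).$$ *)

theory Defs
  imports Complex_Main "Jordan_Normal_Form.Determinant"
begin

text \<open>The paper indexes rows j and columns i from 1 to n;
  Jordan_Normal_Form matrices are 0-indexed, so entry (r,c) corresponds to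
  j = r+1, i = c+1. The condition i \<ge> j - 1 is written as j \<le> i + 1
  (no natural-number truncation issues).\<close>
definition M :: "nat \<Rightarrow> complex mat" where
  "M n = mat n n (\<lambda>(r, c). let j = r + 1; i = c + 1 in
          if j \<le> i + 1 \<or> (j = n \<and> i = n - 2) then 1 else 0)"

definition K :: "nat \<Rightarrow> complex \<Rightarrow> complex" where
  "K n x = det (x \<cdot>\<^sub>m 1\<^sub>m n - M n)"

end

theory Submission
  imports Defs
begin

text \<open>Write \<open>A\<^sub>n = \<lambda>I - M\<^sub>n\<close>. For \<open>n \<ge> 4\<close> the first column of \<open>A\<^sub>n\<close> is
  \<open>(\<lambda> - 1, -1, 0, \<dots>, 0)\<close>, and deleting the first row and column of \<open>A\<^sub>n\<close> gives
  \<open>A\<^sub>n\<^sub>-\<^sub>1\<close> (the exceptional entry moves along the subdiagonal band). Expanding along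
  the first column gives \<open>K\<^sub>n = (\<lambda> - 1) K\<^sub>n\<^sub>-\<^sub>1 + det C\<close>, where \<open>C\<close> is \<open>A\<^sub>n\<^sub>-\<^sub>1\<close> with its
  first row replaced by \<open>(-1, \<dots>, -1)\<close>. The two first rows differ only by \<open>\<lambda>\<close> in
  the first entry, so by linearity \<open>det C = K\<^sub>n\<^sub>-\<^sub>1 - \<lambda> K\<^sub>n\<^sub>-\<^sub>2\<close>.\<close>

lemma det_2x2:
  assumes "A \<in> carrier_mat 2 2"
  shows "det A = A $$ (0,0) * A $$ (1,1) - A $$ (0,1) * A $$ (1,0)"
proof -
  have "det A = (\<Sum>i<2. A $$ (i,0) * cofactor A i 0)"
    by (rule laplace_expansion_column[OF assms]) auto
  also have "\<dots> = A $$ (0,0) * cofactor A 0 0 + A $$ (1,0) * cofactor A 1 0"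
    by (simp add: numeral_2_eq_2)
  also have "cofactor A 0 0 = A $$ (1,1)"
    unfolding cofactor_def using assms
    by (subst det_single) (auto intro: mat_delete_carrier simp: mat_delete_def)
  also have "cofactor A 1 0 = - A $$ (0,1)"
    unfolding cofactor_def using assms
    by (subst det_single) (auto intro: mat_delete_carrier simp: mat_delete_def)
  finally show ?thesis by (simp add: algebra_simps)
qed

lemma det_3x3:
  assumes "A \<in> carrier_mat 3 3"
  shows "det A = A $$ (0,0) * (A $$ (1,1) * A $$ (2,2) - A $$ (1,2) * A $$ (2,1))
     - A $$ (1,0) * (A $$ (0,1) * A $$ (2,2) - A $$ (0,2) * A $$ (2,1))
     + A $$ (2,0) * (A $$ (0,1) * A $$ (1,2) - A $$ (0,2) * A $$ (1,1))"
proof -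
  have dim: "dim_row A = 3" "dim_col A = 3" using assms by auto
  have minor: "\<And>i. mat_delete A i 0 \<in> carrier_mat 2 2"
    using mat_delete_carrier[OF assms] by simp
  have "det A = (\<Sum>i<3. A $$ (i,0) * cofactor A i 0)"
    by (rule laplace_expansion_column[OF assms]) auto
  also have "\<dots> = A $$ (0,0) * cofactor A 0 0 + A $$ (1,0) * cofactor A 1 0
                 + A $$ (2,0) * cofactor A 2 0"
    by (simp add: numeral_3_eq_3 numeral_2_eq_2)
  also have "cofactor A 0 0 = A $$ (1,1) * A $$ (2,2) - A $$ (1,2) * A $$ (2,1)"
    unfolding cofactor_def using minor[of 0]
    by (subst det_2x2) (simp_all add: mat_delete_def dim numeral_2_eq_2)
  also have "cofactor A 1 0 = - (A $$ (0,1) * A $$ (2,2) - A $$ (0,2) * A $$ (2,1))"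
    unfolding cofactor_def using minor[of 1]
    by (subst det_2x2) (simp_all add: mat_delete_def dim numeral_2_eq_2)
  also have "cofactor A 2 0 = A $$ (0,1) * A $$ (1,2) - A $$ (0,2) * A $$ (1,1)"
    unfolding cofactor_def using minor[of 2]
    by (subst det_2x2) (simp_all add: mat_delete_def dim numeral_2_eq_2)
  finally show ?thesis by (simp add: algebra_simps)
qed

lemma det_expand_column_0_two_entries:
  fixes A :: "'a :: comm_ring_1 mat"
  assumes A: "A \<in> carrier_mat n n" and n: "2 \<le> n"
    and zero: "\<And>i. 2 \<le> i \<Longrightarrow> i < n \<Longrightarrow> A $$ (i,0) = 0"
  shows "det A = A $$ (0,0) * det (mat_delete A 0 0) - A $$ (1,0) * det (mat_delete A 1 0)"
proof -
  have "det A = (\<Sum>i<n. A $$ (i,0) * cofactor A i 0)"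
    by (rule laplace_expansion_column[OF A]) (use n in auto)
  also have "\<dots> = (\<Sum>i\<in>{0,1}. A $$ (i,0) * cofactor A i 0)"
    by (rule sum.mono_neutral_right) (use n zero in auto)
  also have "\<dots> = A $$ (0,0) * det (mat_delete A 0 0) - A $$ (1,0) * det (mat_delete A 1 0)"
    by (simp add: cofactor_def)
  finally show ?thesis .
qed

lemma det_diff_row_0_single_entry:
  fixes A B :: "'a :: comm_ring_1 mat"
  assumes A: "A \<in> carrier_mat n n" and B: "B \<in> carrier_mat n n" and n: "0 < n"
    and rows: "\<And>i j. 0 < i \<Longrightarrow> i < n \<Longrightarrow> j < n \<Longrightarrow> A $$ (i,j) = B $$ (i,j)"
    and row_0: "\<And>j. 0 < j \<Longrightarrow> j < n \<Longrightarrow> A $$ (0,j) = B $$ (0,j)"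
  shows "det A - det B = (A $$ (0,0) - B $$ (0,0)) * det (mat_delete A 0 0)"
proof -
  have cofactor_eq: "cofactor B 0 j = cofactor A 0 j" for j
    unfolding cofactor_def
    by (rule arg_cong[where f = "\<lambda>D. _ * det D"], rule eq_matI)
       (use A B rows in \<open>auto simp: mat_delete_def\<close>)
  have "det A - det B = (\<Sum>j<n. (A $$ (0,j) - B $$ (0,j)) * cofactor A 0 j)"
    unfolding laplace_expansion_row[OF A n] laplace_expansion_row[OF B n] cofactor_eq
    by (simp add: sum_subtractf left_diff_distrib)
  also have "\<dots> = (\<Sum>j\<in>{0}. (A $$ (0,j) - B $$ (0,j)) * cofactor A 0 j)"
    by (rule sum.mono_neutral_right) (use n row_0 in auto)
  finally show ?thesis by (simp add: cofactor_def)
qed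

text \<open>The matrix \<open>\<lambda>I - M\<^sub>n\<close>, 0-indexed; the exceptional entry \<open>(j,i) = (n,n-2)\<close>
  becomes \<open>(r,c) = (n-1,n-3)\<close>, written without subtraction.\<close>

definition char_mat :: "nat \<Rightarrow> complex \<Rightarrow> complex mat" where
  "char_mat n x = mat n n (\<lambda>(r,c). (if r = c then x else 0) -
      (if r \<le> c + 1 \<or> (r + 1 = n \<and> c + 3 = n) then 1 else 0))"

lemma K_eq_det_char_mat: "K n x = det (char_mat n x)"
  unfolding K_def
  by (rule arg_cong[where f = det], rule eq_matI)
     (auto simp: M_def char_mat_def Let_def)

lemma char_mat_carrier: "char_mat n x \<in> carrier_mat n n"
  by (simp add: char_mat_def)

lemma mat_delete_char_mat_0_0: "mat_delete (char_mat (Suc n) x) 0 0 = char_mat n x"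
  by (rule eq_matI) (auto simp: mat_delete_def char_mat_def)

lemma K_2: "K 2 x = x^2 - 2 * x"
  unfolding K_eq_det_char_mat
  by (subst det_2x2) (auto simp: char_mat_def power2_eq_square algebra_simps)

lemma K_3: "K 3 x = x^3 - 3 * x^2"
  unfolding K_eq_det_char_mat
  by (subst det_3x3) (auto simp: char_mat_def power2_eq_square power3_eq_cube algebra_simps)

lemma K_recurrence:
  assumes "4 \<le> n"
  shows "K n x = x * K (n - 1) x - x * K (n - 2) x"
proof -
  define m where "m = n - 2"
  have n: "n = Suc (Suc m)" and m: "2 \<le> m"
    using assms by (simp_all add: m_def)
  define A where "A = char_mat n x"
  define C where "C = mat_delete A 1 0"
  have A: "A \<in> carrier_mat n n" by (simp add: A_def char_mat_carrier)
  have E: "mat_delete A 0 0 = char_mat (Suc m) x"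
    by (simp add: A_def n mat_delete_char_mat_0_0)
  have C: "C \<in> carrier_mat (Suc m) (Suc m)"
    using mat_delete_carrier[OF A] by (simp add: C_def n)
  have column_0: "A $$ (i,0) = 0" if "2 \<le> i" "i < n" for i
    using that m by (simp add: A_def char_mat_def n)
  have "det A = (x - 1) * K (Suc m) x + det C"
    using det_expand_column_0_two_entries[OF A _ column_0] m
    by (simp add: E C_def K_eq_det_char_mat) (simp add: A_def char_mat_def n)
  moreover have "K (Suc m) x - det C = x * K m x"
  proof -
    have "det (char_mat (Suc m) x) - det C = x * det (char_mat m x)"
      using det_diff_row_0_single_entry[OF char_mat_carrier C]
      by (simp add: mat_delete_char_mat_0_0)
         (simp add: C_def A_def mat_delete_def char_mat_def n)
    then show ?thesis by (simp add: K_eq_det_char_mat)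
  qed
  ultimately show ?thesis
    by (simp add: A_def n K_eq_det_char_mat algebra_simps)
qed

theorem lemma2:
  shows "(\<forall>x. K 3 x = x^3 - 3 * x^2)
       \<and> (\<forall>x. K 4 x = x^4 - 4 * x^3 + 2 * x^2)
       \<and> (\<forall>n \<ge> 5. \<forall>x. K n x = x * K (n - 1) x - x * K (n - 2) x)"
proof (intro conjI allI impI)
  fix x :: complex
  show "K 3 x = x^3 - 3 * x^2" by (rule K_3)
  have "K 4 x = x * (x^3 - 3 * x^2) - x * (x^2 - 2 * x)"
    using K_recurrence[of 4 x] by (simp add: K_3 K_2)
  then show "K 4 x = x^4 - 4 * x^3 + 2 * x^2"
    by (simp add: power_numeral_reduce algebra_simps)
next
  fix n :: nat and x :: complex
  assume "5 \<le> n"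
  then show "K n x = x * K (n - 1) x - x * K (n - 2) x" by (intro K_recurrence) simp
qed

end
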